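(* Assume the quantities $\overline{P}^c_e(t)$ and $\overline{P}^d_e(t)$ defined in the context are positive for all $t=1,\ldots,T$ (e.g. if $\underline{S}<s_0<\overline{S}$). Then for every $t\in\{1,\ldots,T\}$ and every $\overline{\tau}\in\{0,\ldots,T-t\}$ the linear inequalities $$\sum_{\tau=0}^{\overline{\tau}}\Big(p^c_{t+\tau}+\overline{\rho}^c(t,\tau,\overline{\tau})\,p^d_{t+\tau}\Big)\le\sum_{\tau=0}^{\overline{\tau}}c(t,\tau),\qquad(\mathrm{VIc})$$ $$\sum_{\tau=0}^{\overline{\tau}}\Big(p^d_{t+\tau}+\overline{\rho}^d(t,\tau,\overline{\tau})\,p^c_{t+\tau}\Big)\le\sum_{\tau=0}^{\overline{\tau}}d(t,\tau)\qquad(\mathrm{VId})$$ are satisfied by every $(p^d,p^c,s)\in\mathcal{P}$.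
   Context: Let $T\ge1$ be an integer, $\Delta>0$, $\eta_c,\eta_d\in(0,1]$, $\overline{P}^d,\overline{P}^c>0$, $\underline{S}<\overline{S}$, and a given initial state of charge $s_0\in[\underline{S},\overline{S}]$. The storage feasible set $\mathcal{P}$ is the set of $(p^d,p^c,s)\in\mathbb{R}^T_{\ge0}\times\mathbb{R}^T_{\ge0}\times\mathbb{R}^T_{\ge0}$ with $p^d_t\le\overline{P}^d$, $p^c_t\le\overline{P}^c$, $\underline{S}\le s_t\le\overline{S}$, $s_t=s_{t-1}+\Delta(\eta_cp^c_t-p^d_t/\eta_d)$ for $t=1,\ldots,T$, and $p^d_tp^c_t=0$ for all $t$. Let $\overline{P}^d_e=\min\{\overline{P}^d,\eta_d(\overline{S}-\underline{S})/\Delta\}$, $\overline{P}^c_e=\min\{\overline{P}^c,(\overline{S}-\underline{S})/(\Delta\eta_c)\}$, and $[x]^+=\max\{x,0\}$. Set $\underline{s}_0(0)=\overline{s}_0(0)=s_0$ and for $t=1,\ldots,T-1$: $\underline{s}_0(t)=\max\{\underline{s}_0(t-1)-\Delta\overline{P}^d_e/\eta_d,\ \underline{S}\}$, $\overline{s}_0(t)=\min\{\overline{s}_0(t-1)+\Delta\eta_c\overline{P}^c_e,\ \overline{S}\}$. For $t=1,\ldots,T$, $\overline{\tau}=0,\ldots,T-t$: $c(t,\overline{\tau})=\min\{\overline{P}^c_e,\ [(\overline{S}-\underline{s}_0(t-1))/(\Delta\eta_c)-\overline{\tau}\,\overline{P}^c_e]^+\}$, $d(t,\overline{\tau})=\min\{\overline{P}^d_e,\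 [(\overline{s}_0(t-1)-\underline{S})\eta_d/\Delta-\overline{\tau}\,\overline{P}^d_e]^+\}$. For $\tau=0,\ldots,T-2$: $\overline{c}(\tau)=\min\{\overline{P}^c_e,[(\overline{S}-\underline{S})/(\Delta\eta_c)-\tau\overline{P}^c_e]^+\}$, $\overline{d}(\tau)=\min\{\overline{P}^d_e,[(\overline{S}-\underline{S})\eta_d/\Delta-\tau\overline{P}^d_e]^+\}$. For $t=1,\ldots,T$: $\overline{P}^c_e(t)=c(t,0)$, $\overline{P}^d_e(t)=d(t,0)$. For $t=1,\ldots,T$, $\overline{\tau}=0,\ldots,T-t$, $\tau=0,\ldots,\overline{\tau}$: $\rho^c(t,\tau,\overline{\tau})=\max\{-\overline{P}^d_e(t+\tau)/(\eta_d\eta_c),\ \sum_{j=\tau}^{\overline{\tau}}c(t,j)-\sum_{j=0}^{\overline{\tau}-\tau-1}\overline{c}(j)\}$, $\rho^d(t,\tau,\overline{\tau})=\max\{-\eta_d\eta_c\overline{P}^c_e(t+\tau),\ \sum_{j=\tau}^{\overline{\tau}}d(t,j)-\sum_{j=0}^{\overline{\tau}-\tau-1}\overline{d}(j)\}$ (empty sums are $0$); $\overline{\rho}^c(t,\tau,\overline{\tau})=-1/(\eta_d\eta_c)$ if $\rho^c(t,\tau,\overline{\tau})\le0$ and $=\rho^c(t,\tau,\overline{\tau})/\overline{P}^d_e(t+\tau)$ otherwise; $\overline{\rho}^d(t,\tau,\overline{\tau})=-\eta_d\eta_c$ if $\rho^d(t,\tau,\overline{\tau})\le0$ and $=\rho^d(t,\tau,\overline{\tau})/\overline{P}^c_e(t+\tau)$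 otherwise. *)

theory Defs
  imports Complex_Main
begin

text \<open>Parameters: Dt (time step Delta), ec (eta_c), ed (eta_d), Pd, Pc (power limits),
  Smin, Smax (state-of-charge limits), s0 (initial state of charge).\<close>

definition Pde :: "real \<Rightarrow> real \<Rightarrow> real \<Rightarrow> real \<Rightarrow> real \<Rightarrow> real" where
  "Pde Dt ed Pd Smin Smax = min Pd (ed * (Smax - Smin) / Dt)"

definition Pce :: "real \<Rightarrow> real \<Rightarrow> real \<Rightarrow> real \<Rightarrow> real \<Rightarrow> real" where
  "Pce Dt ec Pc Smin Smax = min Pc ((Smax - Smin) / (Dt * ec))"

definition pos :: "real \<Rightarrow> real" where
  "pos x = max x 0"

fun slow :: "real \<Rightarrow> real \<Rightarrow> real \<Rightarrow> real \<Rightarrow> real \<Rightarrow> real \<Rightarrow> nat \<Rightarrow> real" where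
  "slow Dt ed Pd Smin Smax s0 0 = s0"
| "slow Dt ed Pd Smin Smax s0 (Suc t) =
     max (slow Dt ed Pd Smin Smax s0 t - Dt * Pde Dt ed Pd Smin Smax / ed) Smin"

fun shigh :: "real \<Rightarrow> real \<Rightarrow> real \<Rightarrow> real \<Rightarrow> real \<Rightarrow> real \<Rightarrow> nat \<Rightarrow> real" where
  "shigh Dt ec Pc Smin Smax s0 0 = s0"
| "shigh Dt ec Pc Smin Smax s0 (Suc t) =
     min (shigh Dt ec Pc Smin Smax s0 t + Dt * ec * Pce Dt ec Pc Smin Smax) Smax"

definition cfun :: "real \<Rightarrow> real \<Rightarrow> real \<Rightarrow> real \<Rightarrow> real \<Rightarrow> real \<Rightarrow> real \<Rightarrow> real \<Rightarrow> nat \<Rightarrow> nat \<Rightarrow> real" where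
  "cfun Dt ec ed Pd Pc Smin Smax s0 t tb =
     min (Pce Dt ec Pc Smin Smax)
         (pos ((Smax - slow Dt ed Pd Smin Smax s0 (t - 1)) / (Dt * ec) - real tb * Pce Dt ec Pc Smin Smax))"

definition dfun :: "real \<Rightarrow> real \<Rightarrow> real \<Rightarrow> real \<Rightarrow> real \<Rightarrow> real \<Rightarrow> real \<Rightarrow> real \<Rightarrow> nat \<Rightarrow> nat \<Rightarrow> real" where
  "dfun Dt ec ed Pd Pc Smin Smax s0 t tb =
     min (Pde Dt ed Pd Smin Smax)
         (pos ((shigh Dt ec Pc Smin Smax s0 (t - 1) - Smin) * ed / Dt - real tb * Pde Dt ed Pd Smin Smax))"

definition cbar :: "real \<Rightarrow> real \<Rightarrow> real \<Rightarrow> real \<Rightarrow> real \<Rightarrow> nat \<Rightarrow> real" where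
  "cbar Dt ec Pc Smin Smax k =
     min (Pce Dt ec Pc Smin Smax) (pos ((Smax - Smin) / (Dt * ec) - real k * Pce Dt ec Pc Smin Smax))"

definition dbar :: "real \<Rightarrow> real \<Rightarrow> real \<Rightarrow> real \<Rightarrow> real \<Rightarrow> nat \<Rightarrow> real" where
  "dbar Dt ed Pd Smin Smax k =
     min (Pde Dt ed Pd Smin Smax) (pos ((Smax - Smin) * ed / Dt - real k * Pde Dt ed Pd Smin Smax))"

definition PceT :: "real \<Rightarrow> real \<Rightarrow> real \<Rightarrow> real \<Rightarrow> real \<Rightarrow> real \<Rightarrow> real \<Rightarrow> real \<Rightarrow> nat \<Rightarrow> real" where
  "PceT Dt ec ed Pd Pc Smin Smax s0 t = cfun Dt ec ed Pd Pc Smin Smax s0 t 0"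

definition PdeT :: "real \<Rightarrow> real \<Rightarrow> real \<Rightarrow> real \<Rightarrow> real \<Rightarrow> real \<Rightarrow> real \<Rightarrow> real \<Rightarrow> nat \<Rightarrow> real" where
  "PdeT Dt ec ed Pd Pc Smin Smax s0 t = dfun Dt ec ed Pd Pc Smin Smax s0 t 0"

definition rhoc :: "real \<Rightarrow> real \<Rightarrow> real \<Rightarrow> real \<Rightarrow> real \<Rightarrow> real \<Rightarrow> real \<Rightarrow> real \<Rightarrow> nat \<Rightarrow> nat \<Rightarrow> nat \<Rightarrow> real" where
  "rhoc Dt ec ed Pd Pc Smin Smax s0 t tau tb =
     max (- PdeT Dt ec ed Pd Pc Smin Smax s0 (t + tau) / (ed * ec))
         ((\<Sum>j\<in>{tau..tb}. cfun Dt ec ed Pd Pc Smin Smax s0 t j)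
          - (\<Sum>j<tb - tau. cbar Dt ec Pc Smin Smax j))"

definition rhod :: "real \<Rightarrow> real \<Rightarrow> real \<Rightarrow> real \<Rightarrow> real \<Rightarrow> real \<Rightarrow> real \<Rightarrow> real \<Rightarrow> nat \<Rightarrow> nat \<Rightarrow> nat \<Rightarrow> real" where
  "rhod Dt ec ed Pd Pc Smin Smax s0 t tau tb =
     max (- ed * ec * PceT Dt ec ed Pd Pc Smin Smax s0 (t + tau))
         ((\<Sum>j\<in>{tau..tb}. dfun Dt ec ed Pd Pc Smin Smax s0 t j)
          - (\<Sum>j<tb - tau. dbar Dt ed Pd Smin Smax j))"

definition rhocbar :: "real \<Rightarrow> real \<Rightarrow> real \<Rightarrow> real \<Rightarrow> real \<Rightarrow> real \<Rightarrow> real \<Rightarrow> real \<Rightarrow> nat \<Rightarrow> nat \<Rightarrow> nat \<Rightarrow> real" where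
  "rhocbar Dt ec ed Pd Pc Smin Smax s0 t tau tb =
     (if rhoc Dt ec ed Pd Pc Smin Smax s0 t tau tb \<le> 0 then - 1 / (ed * ec)
      else rhoc Dt ec ed Pd Pc Smin Smax s0 t tau tb / PdeT Dt ec ed Pd Pc Smin Smax s0 (t + tau))"

definition rhodbar :: "real \<Rightarrow> real \<Rightarrow> real \<Rightarrow> real \<Rightarrow> real \<Rightarrow> real \<Rightarrow> real \<Rightarrow> real \<Rightarrow> nat \<Rightarrow> nat \<Rightarrow> nat \<Rightarrow> real" where
  "rhodbar Dt ec ed Pd Pc Smin Smax s0 t tau tb =
     (if rhod Dt ec ed Pd Pc Smin Smax s0 t tau tb \<le> 0 then - ed * ec
      else rhod Dt ec ed Pd Pc Smin Smax s0 t tau tb / PceT Dt ec ed Pd Pc Smin Smax s0 (t + tau))"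

definition storage_feasible ::
  "nat \<Rightarrow> real \<Rightarrow> real \<Rightarrow> real \<Rightarrow> real \<Rightarrow> real \<Rightarrow> real \<Rightarrow> real \<Rightarrow> real \<Rightarrow>
   (nat \<Rightarrow> real) \<Rightarrow> (nat \<Rightarrow> real) \<Rightarrow> (nat \<Rightarrow> real) \<Rightarrow> bool" where
  "storage_feasible T Dt ec ed Pd Pc Smin Smax s0 pd pc s \<longleftrightarrow>
     s 0 = s0 \<and>
     (\<forall>t\<in>{1..T}. 0 \<le> pd t \<and> 0 \<le> pc t \<and> 0 \<le> s t \<and>
        pd t \<le> Pd \<and> pc t \<le> Pc \<and> Smin \<le> s t \<and> s t \<le> Smax \<and>
        s t = s (t - 1) + Dt * (ec * pc t - pd t / ed) \<and>
        pd t * pc t = 0)"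

end

theory Submission
  imports Defs
begin

(* Write C(m) = min A (m P) with P = P^c_e and A = (Smax - slow (t-1)) / (Dt ec), the headroom above
   the lowest reachable state of charge: the first m values c(t,_) sum to C(m), and the first m values
   cbar(_) sum to min B (m P) with B = (Smax - Smin) / (Dt ec).
   With the default coefficient -1/(ed ec) a term of (VIc) is the net charge
   (s (t+tau) - s (t+tau-1)) / (Dt ec), so window sums of default terms telescope: they are at most A
   from the start of the horizon, at most B elsewhere, and at most P per step. A positive coefficient
   only changes a discharging step, where pc = 0 and pd <= P^d_e(t+tau) bound the term by
   rho^c = C(tb+1) - C(tau) - min B ((tb-tau) P). Splitting the sum at the last such step, the part
   before it is bounded by induction, the part after it by a window, and concavity of min closes the gap.
   (VId) is (VIc) for the mirrored storage s |-> Smin + Smax - s, which exchanges charging and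
   discharging and replaces (ec, ed) by (1/ed, 1/ec). *)

lemma sum_min_staircase:
  fixes A P :: real
  assumes "0 \<le> A" "0 \<le> P"
  shows "(\<Sum>j<m. min P (pos (A - real j * P))) = min A (real m * P)"
proof (induction m)
  case 0
  then show ?case using assms by simp
next
  case (Suc m)
  then show ?case using assms by (auto simp: pos_def min_def max_def algebra_simps)
qed

lemma sum_atLeastAtMost_eq_diff:
  fixes f :: "nat \<Rightarrow> 'a::ab_group_add"
  assumes "j \<le> Suc n"
  shows "(\<Sum>i = j..n. f i) = (\<Sum>i<Suc n. f i) - (\<Sum>i<j. f i)"
  using sum_diff_nat_ivl[of 0 j "Suc n" f] assms
  by (simp del: sum.lessThan_Suc sum.op_ivl_Suc
      add: atLeast0LessThan atLeastLessThanSuc_atLeastAtMost atLeast0AtMost lessThan_Suc_atMost)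

lemma min_increment_le_shifted:
  fixes A B x y z :: real
  assumes "0 \<le> z" "z \<le> x" "x \<le> y" "A \<le> B"
  shows "min A y - min A x \<le> min B (y - z) - min B (x - z)"
  using assms by (simp add: min_def)

lemma sum_le_min_of_window_bounds:
  fixes a d :: "nat \<Rightarrow> real" and A B P :: real
  assumes AB: "A \<le> B" and P: "0 \<le> P"
    and d_le: "\<And>j. j \<le> n \<Longrightarrow> d j \<le> P"
    and prefix: "\<And>m. m \<le> Suc n \<Longrightarrow> (\<Sum>j<m. d j) \<le> A"
    and window: "\<And>l m. l \<le> m \<Longrightarrow> m \<le> Suc n \<Longrightarrow> (\<Sum>j = l..<m. d j) \<le> B"
    and a_cases: "\<And>j. j \<le> n \<Longrightarrow> a j = d j \<or>
      a j \<le> min A (real (Suc n) * P) - min A (real j * P) - min B (real (n - j) * P)"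
    and "m \<le> Suc n"
  shows "(\<Sum>j<m. a j) \<le> min A (real m * P)"
  using \<open>m \<le> Suc n\<close>
proof (induction m rule: less_induct)
  case (less m)
  have window_le: "(\<Sum>j = l..<m. d j) \<le> min B (real (m - l) * P)" if "l \<le> m" for l
  proof -
    have "(\<Sum>j = l..<m. d j) \<le> real (card {l..<m}) * P"
      by (rule sum_bounded_above) (use d_le less.prems in auto)
    then show ?thesis using window[OF that less.prems] by simp
  qed
  define S where "S = {j. j < m \<and> a j \<noteq> d j}"
  show ?case
  proof (cases "S = {}")
    case True
    then have "(\<Sum>j<m. a j) = (\<Sum>j = 0..<m. d j)"
      by (auto simp: S_def atLeast0LessThan intro: sum.cong)
    then show ?thesis using prefix[OF less.prems] window_le[of 0] by (simp add: atLeast0LessThan)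
  next
    case False
    define k where "k = Max S"
    have "finite S" by (simp add: S_def)
    then have "k \<in> S" and after_k: "\<And>j. j \<in> S \<Longrightarrow> j \<le> k"
      using False by (simp_all add: k_def)
    then have "k < m" "a k \<noteq> d k" by (simp_all add: S_def)
    have "(\<Sum>j<m. a j) = (\<Sum>j<k. a j) + a k + (\<Sum>j = Suc k..<m. a j)"
      using \<open>k < m\<close> sum.atLeastLessThan_concat[of 0 "Suc k" m a]
      by (simp add: atLeast0LessThan)
    also have "(\<Sum>j = Suc k..<m. a j) = (\<Sum>j = Suc k..<m. d j)"
      using after_k by (force simp: S_def intro: sum.cong)
    finally have split: "(\<Sum>j<m. a j) = (\<Sum>j<k. a j) + a k + (\<Sum>j = Suc k..<m. d j)" .
    have "(\<Sum>j<k. a j) \<le> min A (real k * P)"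
      using less.IH \<open>k < m\<close> less.prems by simp
    moreover have "a k \<le> min A (real (Suc n) * P) - min A (real k * P) - min B (real (n - k) * P)"
      using a_cases[of k] \<open>a k \<noteq> d k\<close> \<open>k < m\<close> less.prems by auto
    moreover have "(\<Sum>j = Suc k..<m. d j) \<le> min B (real (m - Suc k) * P)"
      using window_le[of "Suc k"] \<open>k < m\<close> by simp
    moreover have "min A (real (Suc n) * P) - min A (real m * P)
        \<le> min B (real (n - k) * P) - min B (real (m - Suc k) * P)"
    proof -
      have "real (Suc n) * P - real (Suc k) * P = real (n - k) * P"
           "real m * P - real (Suc k) * P = real (m - Suc k) * P"
        using \<open>k < m\<close> less.prems by (simp_all add: of_nat_diff algebra_simps)
      then show ?thesis
        using min_increment_le_shifted[of "real (Suc k) * P" "real m * P" "real (Suc n) * P" A B]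
          \<open>k < m\<close> less.prems P AB by (simp add: mult_right_mono)
    qed
    ultimately show ?thesis using split by linarith
  qed
qed

lemma Pce_mirror: "Pce Dt (1 / ed) Pd Smin Smax = Pde Dt ed Pd Smin Smax"
  by (simp add: Pce_def Pde_def mult.commute)

lemma Pde_mirror: "Pde Dt (1 / ec) Pc Smin Smax = Pce Dt ec Pc Smin Smax"
  by (simp add: Pce_def Pde_def mult.commute)

lemma slow_mirror:
  "slow Dt (1 / ec) Pc Smin Smax (Smin + Smax - s0) t = Smin + Smax - shigh Dt ec Pc Smin Smax s0 t"
  by (induction t) (auto simp: Pde_mirror min_def max_def algebra_simps)

lemma shigh_mirror:
  "shigh Dt (1 / ed) Pd Smin Smax (Smin + Smax - s0) t = Smin + Smax - slow Dt ed Pd Smin Smax s0 t"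
  by (induction t) (auto simp: Pce_mirror min_def max_def algebra_simps)

lemma cfun_mirror:
  "cfun Dt (1 / ed) (1 / ec) Pc Pd Smin Smax (Smin + Smax - s0) = dfun Dt ec ed Pd Pc Smin Smax s0"
  by (simp add: fun_eq_iff cfun_def dfun_def Pce_mirror slow_mirror)

lemma dfun_mirror:
  "dfun Dt (1 / ed) (1 / ec) Pc Pd Smin Smax (Smin + Smax - s0) = cfun Dt ec ed Pd Pc Smin Smax s0"
  by (simp add: fun_eq_iff cfun_def dfun_def Pde_mirror shigh_mirror mult.commute)

lemma cbar_mirror: "cbar Dt (1 / ed) Pd Smin Smax = dbar Dt ed Pd Smin Smax"
  by (simp add: fun_eq_iff cbar_def dbar_def Pce_mirror)

lemma rhocbar_mirror:
  "rhocbar Dt (1 / ed) (1 / ec) Pc Pd Smin Smax (Smin + Smax - s0) = rhodbar Dt ec ed Pd Pc Smin Smax s0"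
  by (simp add: fun_eq_iff rhocbar_def rhodbar_def rhoc_def rhod_def PceT_def PdeT_def
      cfun_mirror dfun_mirror cbar_mirror mult_ac)

locale storage_trajectory =
  fixes T :: nat and Dt ec ed Pd Pc Smin Smax s0 :: real
    and pd pc s :: "nat \<Rightarrow> real"
  assumes Dt_pos: "0 < Dt" and ec_pos: "0 < ec" and ed_pos: "0 < ed"
    and Pd_nonneg: "0 \<le> Pd" and Pc_nonneg: "0 \<le> Pc"
    and s_initial: "s 0 = s0" and s0_bounds: "Smin \<le> s0" "s0 \<le> Smax"
    and power_bounds: "\<And>u. u \<in> {1..T} \<Longrightarrow> 0 \<le> pd u \<and> pd u \<le> Pd \<and> 0 \<le> pc u \<and> pc u \<le> Pc"
    and soc_bounds: "\<And>u. u \<in> {1..T} \<Longrightarrow> Smin \<le> s u \<and> s u \<le> Smax"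
    and soc_dynamics: "\<And>u. u \<in> {1..T} \<Longrightarrow> s u = s (u - 1) + Dt * (ec * pc u - pd u / ed)"
    and complementarity: "\<And>u. u \<in> {1..T} \<Longrightarrow> pd u * pc u = 0"

lemma storage_feasible_trajectory:
  assumes "0 < Dt" "0 < ec" "0 < ed" "0 \<le> Pd" "0 \<le> Pc" "Smin \<le> s0" "s0 \<le> Smax"
    and "storage_feasible T Dt ec ed Pd Pc Smin Smax s0 pd pc s"
  shows "storage_trajectory T Dt ec ed Pd Pc Smin Smax s0 pd pc s"
  using assms unfolding storage_feasible_def by (intro storage_trajectory.intro) blast+

context storage_trajectory
begin

lemma mirror_trajectory:
  "storage_trajectory T Dt (1 / ed) (1 / ec) Pc Pd Smin Smax (Smin + Smax - s0) pc pd
    (\<lambda>u. Smin + Smax - s u)"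
proof unfold_locales
  fix u assume "u \<in> {1..T}"
  then show "Smin + Smax - s u
      = Smin + Smax - s (u - 1) + Dt * (1 / ed * pd u - pc u / (1 / ec))"
    using soc_dynamics by (simp add: algebra_simps)
qed (use Dt_pos ec_pos ed_pos Pd_nonneg Pc_nonneg s_initial s0_bounds power_bounds soc_bounds
      complementarity in \<open>auto simp: mult.commute\<close>)

lemma soc_bounded: "u \<le> T \<Longrightarrow> Smin \<le> s u \<and> s u \<le> Smax"
  using soc_bounds[of u] s_initial s0_bounds by (cases u) auto

lemma Pde_nonneg: "0 \<le> Pde Dt ed Pd Smin Smax"
  using Dt_pos ed_pos Pd_nonneg s0_bounds by (simp add: Pde_def)

lemma discharge_le:
  assumes "u \<in> {1..T}"
  shows "pd u \<le> Pde Dt ed Pd Smin Smax \<and> Dt * pd u \<le> ed * (s (u - 1) - Smin)"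
proof (cases "pd u = 0")
  case True
  have "Smin \<le> s (u - 1)" using soc_bounded[of "u - 1"] assms by force
  then show ?thesis using True Pde_nonneg ed_pos by simp
next
  case False
  then have "pc u = 0" using complementarity[OF assms] by simp
  then have "Dt * pd u / ed \<le> s (u - 1) - Smin"
    using soc_dynamics[OF assms] soc_bounds[OF assms] by simp
  then have below_soc: "Dt * pd u \<le> ed * (s (u - 1) - Smin)"
    using ed_pos by (simp add: field_simps)
  also have "\<dots> \<le> ed * (Smax - Smin)"
    using soc_bounded[of "u - 1"] assms ed_pos by force
  finally have "pd u \<le> ed * (Smax - Smin) / Dt"
    using Dt_pos by (simp add: field_simps)
  then show ?thesis using below_soc power_bounds[OF assms] by (simp add: Pde_def)
qed

lemma charge_le_Pce: "u \<in> {1..T} \<Longrightarrow> pc u \<le> Pce Dt ec Pc Smin Smax"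
proof -
  assume "u \<in> {1..T}"
  interpret mirrored: storage_trajectory T Dt "1 / ed" "1 / ec" Pc Pd Smin Smax
    "Smin + Smax - s0" pc pd "\<lambda>u. Smin + Smax - s u"
    by (rule mirror_trajectory)
  show ?thesis using mirrored.discharge_le[OF \<open>u \<in> {1..T}\<close>] by (simp add: Pde_mirror)
qed

lemma soc_le_shigh: "u \<le> T \<Longrightarrow> s u \<le> shigh Dt ec Pc Smin Smax s0 u"
proof (induction u)
  case 0
  then show ?case using s_initial by simp
next
  case (Suc u)
  then have u: "Suc u \<in> {1..T}" by simp
  have "Dt * (ec * pc (Suc u)) \<le> Dt * ec * Pce Dt ec Pc Smin Smax"
    using charge_le_Pce[OF u] Dt_pos ec_pos by simp
  moreover have "0 \<le> Dt * pd (Suc u) / ed"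
    using power_bounds[OF u] Dt_pos ed_pos by simp
  ultimately have "s (Suc u) \<le> s u + Dt * ec * Pce Dt ec Pc Smin Smax"
    using soc_dynamics[OF u] by (simp add: right_diff_distrib)
  then show ?case using Suc soc_bounds[OF u] by simp
qed

lemma slow_le_soc: "u \<le> T \<Longrightarrow> slow Dt ed Pd Smin Smax s0 u \<le> s u"
proof -
  assume "u \<le> T"
  interpret mirrored: storage_trajectory T Dt "1 / ed" "1 / ec" Pc Pd Smin Smax
    "Smin + Smax - s0" pc pd "\<lambda>u. Smin + Smax - s u"
    by (rule mirror_trajectory)
  show ?thesis using mirrored.soc_le_shigh[OF \<open>u \<le> T\<close>] by (simp add: shigh_mirror)
qed

lemma slow_ge_Smin: "Smin \<le> slow Dt ed Pd Smin Smax s0 u"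
  using s0_bounds by (cases u) auto

lemma discharge_le_PdeT:
  assumes "u \<in> {1..T}"
  shows "pd u \<le> PdeT Dt ec ed Pd Pc Smin Smax s0 u"
proof -
  have "s (u - 1) \<le> shigh Dt ec Pc Smin Smax s0 (u - 1)"
    using soc_le_shigh[of "u - 1"] assms by force
  then have "ed * (s (u - 1) - Smin) \<le> ed * (shigh Dt ec Pc Smin Smax s0 (u - 1) - Smin)"
    using ed_pos by simp
  then have "Dt * pd u \<le> ed * (shigh Dt ec Pc Smin Smax s0 (u - 1) - Smin)"
    using discharge_le[OF assms] by linarith
  then have "pd u \<le> (shigh Dt ec Pc Smin Smax s0 (u - 1) - Smin) * ed / Dt"
    using Dt_pos by (simp add: field_simps)
  then show ?thesis
    using discharge_le[OF assms] by (simp add: PdeT_def dfun_def pos_def)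
qed

lemma Pce_nonneg: "0 \<le> Pce Dt ec Pc Smin Smax"
  using Dt_pos ec_pos Pc_nonneg s0_bounds by (simp add: Pce_def)

lemma cfun_partial_sum:
  assumes "t0 \<le> T"
  shows "(\<Sum>j<m. cfun Dt ec ed Pd Pc Smin Smax s0 (Suc t0) j)
    = min ((Smax - slow Dt ed Pd Smin Smax s0 t0) / (Dt * ec)) (real m * Pce Dt ec Pc Smin Smax)"
proof -
  have "slow Dt ed Pd Smin Smax s0 t0 \<le> Smax"
    using slow_le_soc[OF assms] soc_bounded[OF assms] by simp
  then have "0 \<le> (Smax - slow Dt ed Pd Smin Smax s0 t0) / (Dt * ec)"
    using Dt_pos ec_pos by simp
  then show ?thesis using sum_min_staircase[OF _ Pce_nonneg] by (simp add: cfun_def)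
qed

lemma cbar_partial_sum:
  "(\<Sum>j<m. cbar Dt ec Pc Smin Smax j)
    = min ((Smax - Smin) / (Dt * ec)) (real m * Pce Dt ec Pc Smin Smax)"
  using sum_min_staircase[OF _ Pce_nonneg] s0_bounds Dt_pos ec_pos by (simp add: cbar_def)

lemma net_charge_step:
  assumes "u \<in> {1..T}"
  shows "pc u + (- 1 / (ed * ec)) * pd u = (s u - s (u - 1)) / (Dt * ec)"
proof -
  have "(s u - s (u - 1)) / (Dt * ec) = Dt * (ec * pc u - pd u / ed) / (Dt * ec)"
    using soc_dynamics[OF assms] by simp
  also have "\<dots> = pc u + (- 1 / (ed * ec)) * pd u"
    using Dt_pos ec_pos ed_pos by (simp add: field_simps)
  finally show ?thesis by simp
qed

lemma net_charge_window:
  assumes "l \<le> m" "t0 + m \<le> T"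
  shows "(\<Sum>j = l..<m. pc (Suc (t0 + j)) + (- 1 / (ed * ec)) * pd (Suc (t0 + j)))
    = (s (t0 + m) - s (t0 + l)) / (Dt * ec)"
proof -
  have "(\<Sum>j = l..<m. pc (Suc (t0 + j)) + (- 1 / (ed * ec)) * pd (Suc (t0 + j)))
      = (\<Sum>j = l..<m. (s (Suc (t0 + j)) - s (t0 + j)) / (Dt * ec))"
    using net_charge_step assms by (intro sum.cong) auto
  also have "\<dots> = (s (t0 + m) - s (t0 + l)) / (Dt * ec)"
    using sum_Suc_diff'[OF assms(1), of "\<lambda>j. s (t0 + j)"] by (simp add: sum_divide_distrib[symmetric])
  finally show ?thesis .
qed

lemma net_charge_le_Pce:
  assumes "u \<in> {1..T}"
  shows "pc u + (- 1 / (ed * ec)) * pd u \<le> Pce Dt ec Pc Smin Smax"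
proof -
  have "0 \<le> pd u / (ed * ec)" using power_bounds[OF assms] ed_pos ec_pos by simp
  then show ?thesis using charge_le_Pce[OF assms] by simp
qed

lemma net_charge_prefix_le:
  assumes "t0 + m \<le> T"
  shows "(\<Sum>j<m. pc (Suc (t0 + j)) + (- 1 / (ed * ec)) * pd (Suc (t0 + j)))
    \<le> (Smax - slow Dt ed Pd Smin Smax s0 t0) / (Dt * ec)"
proof -
  have "s (t0 + m) \<le> Smax" "slow Dt ed Pd Smin Smax s0 t0 \<le> s t0"
    using soc_bounded[of "t0 + m"] slow_le_soc[of t0] assms by simp_all
  then show ?thesis using net_charge_window[of 0 m t0] assms Dt_pos ec_pos
    by (simp add: atLeast0LessThan divide_right_mono)
qed

lemma net_charge_window_le:
  assumes "l \<le> m" "t0 + m \<le> T"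
  shows "(\<Sum>j = l..<m. pc (Suc (t0 + j)) + (- 1 / (ed * ec)) * pd (Suc (t0 + j)))
    \<le> (Smax - Smin) / (Dt * ec)"
proof -
  have "s (t0 + m) \<le> Smax" "Smin \<le> s (t0 + l)"
    using soc_bounded[of "t0 + m"] soc_bounded[of "t0 + l"] assms by simp_all
  then show ?thesis using net_charge_window[OF assms] Dt_pos ec_pos by (simp add: divide_right_mono)
qed

lemma charge_term_cases:
  assumes u: "t + tau \<in> {1..T}"
  shows "pc (t + tau) + rhocbar Dt ec ed Pd Pc Smin Smax s0 t tau tb * pd (t + tau)
        = pc (t + tau) + (- 1 / (ed * ec)) * pd (t + tau)
    \<or> pc (t + tau) + rhocbar Dt ec ed Pd Pc Smin Smax s0 t tau tb * pd (t + tau)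
        \<le> (\<Sum>j\<in>{tau..tb}. cfun Dt ec ed Pd Pc Smin Smax s0 t j)
          - (\<Sum>j<tb - tau. cbar Dt ec Pc Smin Smax j)"
proof -
  let ?r = "rhoc Dt ec ed Pd Pc Smin Smax s0 t tau tb"
  let ?Q = "PdeT Dt ec ed Pd Pc Smin Smax s0 (t + tau)"
  show ?thesis
  proof (cases "?r \<le> 0 \<or> pd (t + tau) = 0")
    case True
    then show ?thesis by (auto simp: rhocbar_def)
  next
    case False
    then have "0 < ?r" "pc (t + tau) = 0" "0 < pd (t + tau)"
      using complementarity[OF u] power_bounds[OF u] by auto
    have "pd (t + tau) \<le> ?Q" using discharge_le_PdeT[OF u] .
    with \<open>0 < pd (t + tau)\<close> have "0 < ?Q" by linarith
    then have "0 \<le> ?Q / (ed * ec)" using ed_pos ec_pos by simp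
    then have r_eq: "?r = (\<Sum>j\<in>{tau..tb}. cfun Dt ec ed Pd Pc Smin Smax s0 t j)
        - (\<Sum>j<tb - tau. cbar Dt ec Pc Smin Smax j)"
      using \<open>0 < ?r\<close> unfolding rhoc_def by linarith
    have "?r / ?Q * pd (t + tau) \<le> ?r / ?Q * ?Q"
      using \<open>pd (t + tau) \<le> ?Q\<close> \<open>0 < ?Q\<close> \<open>0 < ?r\<close> by (intro mult_left_mono) simp_all
    also have "\<dots> = ?r" using \<open>0 < ?Q\<close> by simp
    finally show ?thesis
      using \<open>0 < ?r\<close> \<open>pc (t + tau) = 0\<close> r_eq by (simp add: rhocbar_def)
  qed
qed

lemma charge_valid_inequality:
  assumes "0 < t" "t + tb \<le> T"
  shows "(\<Sum>tau\<in>{0..tb}. pc (t + tau) + rhocbar Dt ec ed Pd Pc Smin Smax s0 t tau tb * pd (t + tau))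
    \<le> (\<Sum>tau\<in>{0..tb}. cfun Dt ec ed Pd Pc Smin Smax s0 t tau)"
proof -
  obtain t0 where t: "t = Suc t0" using assms(1) gr0_implies_Suc by blast
  define A where "A = (Smax - slow Dt ed Pd Smin Smax s0 t0) / (Dt * ec)"
  define B where "B = (Smax - Smin) / (Dt * ec)"
  define P where "P = Pce Dt ec Pc Smin Smax"
  define d where "d j = pc (t + j) + (- 1 / (ed * ec)) * pd (t + j)" for j
  have cfun_sum: "(\<Sum>j<m. cfun Dt ec ed Pd Pc Smin Smax s0 t j) = min A (real m * P)" for m
    using cfun_partial_sum[of t0] assms by (simp add: t A_def P_def)
  have "(\<Sum>j<Suc tb. pc (t + j) + rhocbar Dt ec ed Pd Pc Smin Smax s0 t j tb * pd (t + j))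
      \<le> min A (real (Suc tb) * P)"
  proof (rule sum_le_min_of_window_bounds[where d = d and B = B])
    show "A \<le> B" "0 \<le> P"
      using slow_ge_Smin[of t0] Dt_pos ec_pos Pce_nonneg
      by (simp_all add: A_def B_def P_def divide_right_mono)
    show "d j \<le> P" if "j \<le> tb" for j
      using net_charge_le_Pce[of "t + j"] that assms by (simp add: d_def P_def)
    show "(\<Sum>j<m. d j) \<le> A" if "m \<le> Suc tb" for m
      using net_charge_prefix_le[of t0 m] that assms by (simp add: d_def A_def t)
    show "(\<Sum>j = l..<m. d j) \<le> B" if "l \<le> m" "m \<le> Suc tb" for l m
      using net_charge_window_le[of l m t0] that assms by (simp add: d_def B_def t)
    show "pc (t + j) + rhocbar Dt ec ed Pd Pc Smin Smax s0 t j tb * pd (t + j) = d j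
      \<or> pc (t + j) + rhocbar Dt ec ed Pd Pc Smin Smax s0 t j tb * pd (t + j)
        \<le> min A (real (Suc tb) * P) - min A (real j * P) - min B (real (tb - j) * P)"
      if "j \<le> tb" for j
    proof -
      have "(\<Sum>i = j..tb. cfun Dt ec ed Pd Pc Smin Smax s0 t i)
          = min A (real (Suc tb) * P) - min A (real j * P)"
        using sum_atLeastAtMost_eq_diff[OF le_SucI[OF that], of "cfun Dt ec ed Pd Pc Smin Smax s0 t"]
        unfolding cfun_sum .
      then show ?thesis using charge_term_cases[of t j tb] that assms
        by (simp add: d_def cbar_partial_sum B_def P_def)
    qed
  qed simp
  then show ?thesis using cfun_sum[of "Suc tb"] by (simp only: atLeast0AtMost lessThan_Suc_atMost)
qed

lemma discharge_valid_inequality: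
  assumes "0 < t" "t + tb \<le> T"
  shows "(\<Sum>tau\<in>{0..tb}. pd (t + tau) + rhodbar Dt ec ed Pd Pc Smin Smax s0 t tau tb * pc (t + tau))
    \<le> (\<Sum>tau\<in>{0..tb}. dfun Dt ec ed Pd Pc Smin Smax s0 t tau)"
proof -
  interpret mirrored: storage_trajectory T Dt "1 / ed" "1 / ec" Pc Pd Smin Smax
    "Smin + Smax - s0" pc pd "\<lambda>u. Smin + Smax - s u"
    by (rule mirror_trajectory)
  show ?thesis
    using mirrored.charge_valid_inequality[OF assms] by (simp only: rhocbar_mirror cfun_mirror)
qed

end

theorem theorem1:
  fixes T :: nat and Dt ec ed Pd Pc Smin Smax s0 :: real
    and pd pc s :: "nat \<Rightarrow> real"
  assumes "T \<ge> 1" and "Dt > 0"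
    and "0 < ec" and "ec \<le> 1" and "0 < ed" and "ed \<le> 1"
    and "Pd > 0" and "Pc > 0" and "Smin < Smax"
    and "Smin \<le> s0" and "s0 \<le> Smax"
    and "\<forall>t\<in>{1..T}. PceT Dt ec ed Pd Pc Smin Smax s0 t > 0 \<and> PdeT Dt ec ed Pd Pc Smin Smax s0 t > 0"
    and "storage_feasible T Dt ec ed Pd Pc Smin Smax s0 pd pc s"
  shows "\<forall>t\<in>{1..T}. \<forall>tb\<in>{0..T - t}.
    (\<Sum>tau\<in>{0..tb}. pc (t + tau) + rhocbar Dt ec ed Pd Pc Smin Smax s0 t tau tb * pd (t + tau))
      \<le> (\<Sum>tau\<in>{0..tb}. cfun Dt ec ed Pd Pc Smin Smax s0 t tau)
  \<and> (\<Sum>tau\<in>{0..tb}. pd (t + tau) + rhodbar Dt ec ed Pd Pc Smin Smax s0 t tau tb * pc (t + tau))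
      \<le> (\<Sum>tau\<in>{0..tb}. dfun Dt ec ed Pd Pc Smin Smax s0 t tau)"
proof -
  interpret storage_trajectory T Dt ec ed Pd Pc Smin Smax s0 pd pc s
    using storage_feasible_trajectory assms(2,3,5,7,8,10,11,13) by simp
  have "0 < t \<and> t + tb \<le> T" if "t \<in> {1..T}" "tb \<in> {0..T - t}" for t tb
    using that by auto
  then show ?thesis using charge_valid_inequality discharge_valid_inequality by blast
qed

end
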